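(* Let $X$ be a space with $\chi(X)\le\aleph_0$. There is no continuous, effective and transitive action on $X$ of an $\omega$-balanced group $G$ with $\psi(G)>\aleph_0$.
   Context: All spaces are Tychonoff. An action is effective if only the unit fixes every point, transitive if $Gx=X$. $\psi(G)$ is the pseudocharacter. $G$ is $\omega$-balanced if for each neighborhood $U$ of the unit there is a countable family $\gamma$ of neighborhoods of the unit such that each $x\in G$ has some $V\in\gamma$ with $xVx^{-1}\subset U$. *)

theory Defs
  imports "HOL-Analysis.Analysis" "HOL-Algebra.Group_Action"
begin

definition tychonoff_space :: "'a topology \<Rightarrow> bool" where
  "tychonoff_space X \<equiv> completely_regular_space X \<and> t1_space X"

definition topological_group :: "('a, 'm) monoid_scheme \<Rightarrow> 'a topology \<Rightarrow> bool" where
  "topological_group G T \<equiv> group G \<and> topspace T = carrier G \<and>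
     continuous_map (prod_topology T T) T (\<lambda>(x, y). x \<otimes>\<^bsub>G\<^esub> y) \<and>
     continuous_map T T (\<lambda>x. inv\<^bsub>G\<^esub> x)"

definition countable_character :: "'a topology \<Rightarrow> bool" where
  "countable_character X \<equiv> first_countable X"

definition countable_pseudocharacter :: "'a topology \<Rightarrow> bool" where
  "countable_pseudocharacter X \<equiv>
     \<forall>x \<in> topspace X. \<exists>\<U>. countable \<U> \<and> (\<forall>U \<in> \<U>. openin X U \<and> x \<in> U) \<and>
        topspace X \<inter> \<Inter>\<U> = {x}"

definition omega_balanced :: "('a, 'm) monoid_scheme \<Rightarrow> 'a topology \<Rightarrow> bool" where
  "omega_balanced G T \<equiv>
     \<forall>U. openin T U \<and> \<one>\<^bsub>G\<^esub> \<in> U \<longrightarrow>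
       (\<exists>\<gamma>. countable \<gamma> \<and> (\<forall>V \<in> \<gamma>. openin T V \<and> \<one>\<^bsub>G\<^esub> \<in> V) \<and>
          (\<forall>x \<in> carrier G. \<exists>V \<in> \<gamma>.
             {x \<otimes>\<^bsub>G\<^esub> v \<otimes>\<^bsub>G\<^esub> inv\<^bsub>G\<^esub> x | v. v \<in> V} \<subseteq> U))"

definition continuous_action ::
  "('a, 'm) monoid_scheme \<Rightarrow> 'a topology \<Rightarrow> 'b topology \<Rightarrow> ('a \<Rightarrow> 'b \<Rightarrow> 'b) \<Rightarrow> bool" where
  "continuous_action G T X \<phi> \<equiv> group_action G (topspace X) \<phi> \<and>
     continuous_map (prod_topology T X) X (\<lambda>(g, y). \<phi> g y)"

definition effective_action :: "('a, 'm) monoid_scheme \<Rightarrow> 'b set \<Rightarrow> ('a \<Rightarrow> 'b \<Rightarrow> 'b) \<Rightarrow> bool" where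
  "effective_action G E \<phi> \<equiv>
     \<forall>g \<in> carrier G. (\<forall>y \<in> E. \<phi> g y = y) \<longrightarrow> g = \<one>\<^bsub>G\<^esub>"

definition is_transitive_action :: "('a, 'm) monoid_scheme \<Rightarrow> 'b set \<Rightarrow> ('a \<Rightarrow> 'b \<Rightarrow> 'b) \<Rightarrow> bool" where
  "is_transitive_action G E \<phi> \<equiv> \<forall>x \<in> E. orbit G \<phi> x = E"

end

theory Submission
  imports Defs
begin

text \<open>Fix x0 in X. Continuity of the orbit map turns a countable local base at x0 into
  countably many neighbourhoods of the unit whose intersection, X being T1, lies in the
  stabilizer of x0. Omega-balancedness refines each of them into countably many
  neighbourhoods whose common points lie in every conjugate of that stabilizer. By
  transitivity these conjugates are the stabilizers of all points, so by effectiveness the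
  intersection is the unit alone; translating, every point of G is a countable intersection
  of open sets.\<close>

definition countable_pseudocharacter_at :: "'a topology \<Rightarrow> 'a \<Rightarrow> bool" where
  "countable_pseudocharacter_at X x \<equiv>
     \<exists>\<U>. countable \<U> \<and> (\<forall>U \<in> \<U>. openin X U \<and> x \<in> U) \<and> topspace X \<inter> \<Inter>\<U> = {x}"

lemma topological_group_left_translation:
  assumes "topological_group G T" "a \<in> carrier G"
  shows "continuous_map T T (\<lambda>y. a \<otimes>\<^bsub>G\<^esub> y)"
proof -
  have mult: "continuous_map (prod_topology T T) T (\<lambda>(x, y). x \<otimes>\<^bsub>G\<^esub> y)"
    and "topspace T = carrier G"
    using assms(1) unfolding topological_group_def by auto
  then have "continuous_map T (prod_topology T T) (\<lambda>y. (a, y))"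
    using assms(2) by (simp add: continuous_map_pairwise o_def)
  from continuous_map_compose[OF this mult] show ?thesis by (simp add: o_def)
qed

lemma topological_group_countable_pseudocharacter:
  assumes TG: "topological_group G T" and one: "countable_pseudocharacter_at T \<one>\<^bsub>G\<^esub>"
  shows "countable_pseudocharacter T"
  unfolding countable_pseudocharacter_def
proof
  interpret group G using TG unfolding topological_group_def by simp
  have carrier: "topspace T = carrier G" using TG unfolding topological_group_def by simp
  obtain F where F: "countable F" "\<forall>V \<in> F. openin T V \<and> \<one>\<^bsub>G\<^esub> \<in> V" "topspace T \<inter> \<Inter>F = {\<one>\<^bsub>G\<^esub>}"
    using one unfolding countable_pseudocharacter_at_def by blast
  fix x assume "x \<in> topspace T"
  then have x: "x \<in> carrier G" using carrier by simp
  define \<U> where "\<U> = (\<lambda>V. {y \<in> topspace T. inv\<^bsub>G\<^esub> x \<otimes>\<^bsub>G\<^esub> y \<in> V}) ` F"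
  have "\<forall>U \<in> \<U>. openin T U \<and> x \<in> U"
    unfolding \<U>_def using F(2) x carrier
      openin_continuous_map_preimage[OF topological_group_left_translation[OF TG]] by auto
  moreover have "topspace T \<inter> \<Inter>\<U> = {x}"
  proof (intro equalityI subsetI)
    fix y assume y: "y \<in> topspace T \<inter> \<Inter>\<U>"
    then have "inv\<^bsub>G\<^esub> x \<otimes>\<^bsub>G\<^esub> y \<in> topspace T \<inter> \<Inter>F"
      using x carrier unfolding \<U>_def by auto
    then have "inv\<^bsub>G\<^esub> x \<otimes>\<^bsub>G\<^esub> y = \<one>\<^bsub>G\<^esub>" using F(3) by blast
    moreover have "y \<in> carrier G" using y carrier by blast
    ultimately show "y \<in> {x}"
      using x by (metis inv_closed inv_equality inv_inv singletonI)
  qed (use x carrier F(2) \<U>_def in auto)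
  ultimately show "\<exists>\<U>. countable \<U> \<and> (\<forall>U \<in> \<U>. openin T U \<and> x \<in> U) \<and> topspace T \<inter> \<Inter>\<U> = {x}"
    using F(1) by (intro exI[of _ \<U>]) (simp add: \<U>_def)
qed

lemma omega_balanced_countable_core:
  assumes "omega_balanced G T" "countable \<U>" "\<forall>U \<in> \<U>. openin T U \<and> \<one>\<^bsub>G\<^esub> \<in> U"
  obtains F where "countable F" "\<forall>V \<in> F. openin T V \<and> \<one>\<^bsub>G\<^esub> \<in> V"
    "\<And>g x U. \<forall>V \<in> F. g \<in> V \<Longrightarrow> x \<in> carrier G \<Longrightarrow> U \<in> \<U> \<Longrightarrow>
       x \<otimes>\<^bsub>G\<^esub> g \<otimes>\<^bsub>G\<^esub> inv\<^bsub>G\<^esub> x \<in> U"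
proof -
  have "\<forall>U \<in> \<U>. \<exists>\<gamma>. countable \<gamma> \<and> (\<forall>V \<in> \<gamma>. openin T V \<and> \<one>\<^bsub>G\<^esub> \<in> V) \<and>
          (\<forall>x \<in> carrier G. \<exists>V \<in> \<gamma>. {x \<otimes>\<^bsub>G\<^esub> v \<otimes>\<^bsub>G\<^esub> inv\<^bsub>G\<^esub> x | v. v \<in> V} \<subseteq> U)"
    using assms(1,3) unfolding omega_balanced_def by blast
  then obtain \<Gamma> where \<Gamma>: "\<forall>U \<in> \<U>. countable (\<Gamma> U) \<and> (\<forall>V \<in> \<Gamma> U. openin T V \<and> \<one>\<^bsub>G\<^esub> \<in> V) \<and>
          (\<forall>x \<in> carrier G. \<exists>V \<in> \<Gamma> U. {x \<otimes>\<^bsub>G\<^esub> v \<otimes>\<^bsub>G\<^esub> inv\<^bsub>G\<^esub> x | v. v \<in> V} \<subseteq> U)"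
    by (rule bchoice[THEN exE])
  show thesis
  proof
    show "countable (\<Union>(\<Gamma> ` \<U>))" using \<Gamma> assms(2) by (intro countable_UN) auto
    show "\<forall>V \<in> \<Union>(\<Gamma> ` \<U>). openin T V \<and> \<one>\<^bsub>G\<^esub> \<in> V" using \<Gamma> by blast
    fix g x U assume g: "\<forall>V \<in> \<Union>(\<Gamma> ` \<U>). g \<in> V" and "x \<in> carrier G" "U \<in> \<U>"
    then obtain V where V: "V \<in> \<Gamma> U" and conj: "{x \<otimes>\<^bsub>G\<^esub> v \<otimes>\<^bsub>G\<^esub> inv\<^bsub>G\<^esub> x | v. v \<in> V} \<subseteq> U"
      using \<Gamma> by meson
    have "g \<in> V" using g V \<open>U \<in> \<U>\<close> by blast
    then show "x \<otimes>\<^bsub>G\<^esub> g \<otimes>\<^bsub>G\<^esub> inv\<^bsub>G\<^esub> x \<in> U" using conj by blast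
  qed
qed

lemma continuous_action_orbit_map:
  assumes "continuous_action G T X \<phi>" "x \<in> topspace X"
  shows "continuous_map T X (\<lambda>g. \<phi> g x)"
proof -
  have act: "continuous_map (prod_topology T X) X (\<lambda>(g, y). \<phi> g y)"
    using assms(1) unfolding continuous_action_def by simp
  have "continuous_map T (prod_topology T X) (\<lambda>g. (g, x))"
    using assms(2) by (simp add: continuous_map_pairwise o_def)
  from continuous_map_compose[OF this act] show ?thesis by (simp add: o_def)
qed

lemma continuous_action_stabilizer_countable_intersection:
  assumes "topological_group G T" "continuous_action G T X \<phi>"
    and "first_countable X" "t1_space X" and x0: "x0 \<in> topspace X"
  obtains \<U> where "countable \<U>" "\<forall>U \<in> \<U>. openin T U \<and> \<one>\<^bsub>G\<^esub> \<in> U"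
    "\<And>g. g \<in> carrier G \<Longrightarrow> \<forall>U \<in> \<U>. g \<in> U \<Longrightarrow> \<phi> g x0 = x0"
proof -
  interpret group_action G "topspace X" \<phi>
    using assms(2) unfolding continuous_action_def by simp
  interpret group G using assms(1) unfolding topological_group_def by simp
  have carrier: "topspace T = carrier G" using assms(1) unfolding topological_group_def by simp
  obtain B where B: "countable B" "\<forall>W \<in> B. openin X W"
    "\<And>U. openin X U \<Longrightarrow> x0 \<in> U \<Longrightarrow> \<exists>W \<in> B. x0 \<in> W \<and> W \<subseteq> U"
    using assms(3) x0 unfolding first_countable_def by meson
  have one: "\<phi> \<one>\<^bsub>G\<^esub> x0 = x0" by (metis id_eq_one restrict_apply' x0)
  define \<U> where "\<U> = (\<lambda>W. {g \<in> topspace T. \<phi> g x0 \<in> W}) ` {W \<in> B. x0 \<in> W}"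
  show thesis
  proof
    show "countable \<U>" unfolding \<U>_def using B(1) by simp
    show "\<forall>U \<in> \<U>. openin T U \<and> \<one>\<^bsub>G\<^esub> \<in> U"
      unfolding \<U>_def using B(2) one carrier
        openin_continuous_map_preimage[OF continuous_action_orbit_map[OF assms(2) x0]] by auto
    fix g assume g: "g \<in> carrier G" and "\<forall>U \<in> \<U>. g \<in> U"
    then have near: "\<phi> g x0 \<in> W" if "W \<in> B" "x0 \<in> W" for W
      using that unfolding \<U>_def by auto
    show "\<phi> g x0 = x0"
    proof (rule ccontr)
      assume "\<phi> g x0 \<noteq> x0"
      moreover have "\<phi> g x0 \<in> topspace X" using element_image g x0 by blast
      ultimately obtain U where "openin X U" "x0 \<in> U" "\<phi> g x0 \<notin> U"
        using assms(4) x0 unfolding t1_space_def by metis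
      then show False using B(3) near by blast
    qed
  qed
qed

lemma (in group_action) conjugate_fixes_iff:
  assumes "x \<in> E" "g \<in> carrier G" "h \<in> carrier G"
  shows "\<phi> (inv h \<otimes> g \<otimes> h) x = x \<longleftrightarrow> \<phi> g (\<phi> h x) = \<phi> h x"
proof -
  interpret group G using group_hom unfolding group_hom_def by simp
  have hx: "\<phi> h x \<in> E" and ghx: "\<phi> g (\<phi> h x) \<in> E"
    using assms element_image by blast+
  have "\<phi> (inv h \<otimes> g \<otimes> h) x = \<phi> (inv h \<otimes> g) (\<phi> h x)"
    using assms by (simp add: composition_rule)
  also have "\<dots> = \<phi> (inv h) (\<phi> g (\<phi> h x))"
    using assms hx by (simp add: composition_rule)
  finally have "\<phi> (inv h \<otimes> g \<otimes> h) x = \<phi> (inv h) (\<phi> g (\<phi> h x))" .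
  moreover have "\<phi> (inv h) (\<phi> h x) = x"
  proof -
    have "\<phi> (inv h) (\<phi> h x) = \<phi> \<one> x"
      using assms composition_rule[of x "inv h" h] by simp
    also have "\<dots> = x"
      using assms by (simp add: id_eq_one[symmetric])
    finally show ?thesis .
  qed
  ultimately show ?thesis
    using inj_prop[OF inv_closed[OF assms(3)]] hx ghx by (metis inj_on_eq_iff)
qed

lemma effective_transitive_core_of_stabilizer_trivial:
  assumes "group_action G E \<phi>" "effective_action G E \<phi>" "is_transitive_action G E \<phi>"
    and x0: "x0 \<in> E" and g: "g \<in> carrier G"
    and conj_fix: "\<And>x. x \<in> carrier G \<Longrightarrow> \<phi> (x \<otimes>\<^bsub>G\<^esub> g \<otimes>\<^bsub>G\<^esub> inv\<^bsub>G\<^esub> x) x0 = x0"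
  shows "g = \<one>\<^bsub>G\<^esub>"
proof -
  interpret group_action G E \<phi> by (rule assms(1))
  interpret group G using group_hom unfolding group_hom_def by simp
  have "\<phi> g y = y" if y: "y \<in> E" for y
  proof -
    obtain h where h: "h \<in> carrier G" and yh: "y = \<phi> h x0"
      using assms(3) x0 y unfolding is_transitive_action_def orbit_def by blast
    have "\<phi> (inv\<^bsub>G\<^esub> h \<otimes>\<^bsub>G\<^esub> g \<otimes>\<^bsub>G\<^esub> h) x0 = x0"
      using conj_fix[of "inv\<^bsub>G\<^esub> h"] h by simp
    then show ?thesis using conjugate_fixes_iff[OF x0 g h] yh by simp
  qed
  then show ?thesis using assms(2) g unfolding effective_action_def by blast
qed

lemma countable_pseudocharacter_at_one_if_effective_transitive_action:
  assumes TG: "topological_group G T" and "omega_balanced G T"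
    and act: "continuous_action G T X \<phi>" "effective_action G (topspace X) \<phi>"
      "is_transitive_action G (topspace X) \<phi>"
    and "first_countable X" "t1_space X"
  shows "countable_pseudocharacter_at T \<one>\<^bsub>G\<^esub>"
proof -
  interpret group G using TG unfolding topological_group_def by simp
  have carrier: "topspace T = carrier G" using TG unfolding topological_group_def by simp
  have trivial_core: "\<exists>F. countable F \<and> (\<forall>V \<in> F. openin T V \<and> \<one>\<^bsub>G\<^esub> \<in> V) \<and>
      (\<forall>g \<in> carrier G. (\<forall>V \<in> F. g \<in> V) \<longrightarrow> g = \<one>\<^bsub>G\<^esub>)"
  proof (cases "topspace X = {}")
    case True
    then show ?thesis using act(2) unfolding effective_action_def by auto
  next
    case False
    then obtain x0 where x0: "x0 \<in> topspace X" by blast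
    obtain \<U> where \<U>: "countable \<U>" "\<forall>U \<in> \<U>. openin T U \<and> \<one>\<^bsub>G\<^esub> \<in> U"
      "\<And>g. g \<in> carrier G \<Longrightarrow> \<forall>U \<in> \<U>. g \<in> U \<Longrightarrow> \<phi> g x0 = x0"
      using continuous_action_stabilizer_countable_intersection[OF TG act(1) assms(6,7) x0]
      by blast
    obtain F where F: "countable F" "\<forall>V \<in> F. openin T V \<and> \<one>\<^bsub>G\<^esub> \<in> V"
      "\<And>g x U. \<forall>V \<in> F. g \<in> V \<Longrightarrow> x \<in> carrier G \<Longrightarrow> U \<in> \<U> \<Longrightarrow> x \<otimes>\<^bsub>G\<^esub> g \<otimes>\<^bsub>G\<^esub> inv\<^bsub>G\<^esub> x \<in> U"
      using omega_balanced_countable_core[OF assms(2) \<U>(1,2)] by blast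
    have "g = \<one>\<^bsub>G\<^esub>" if g: "g \<in> carrier G" and "\<forall>V \<in> F. g \<in> V" for g
    proof (rule effective_transitive_core_of_stabilizer_trivial[OF _ act(2,3) x0 g])
      show "group_action G (topspace X) \<phi>"
        using act(1) unfolding continuous_action_def by simp
      fix x assume x: "x \<in> carrier G"
      have "x \<otimes>\<^bsub>G\<^esub> g \<otimes>\<^bsub>G\<^esub> inv\<^bsub>G\<^esub> x \<in> carrier G" using x g by simp
      moreover have "\<forall>U \<in> \<U>. x \<otimes>\<^bsub>G\<^esub> g \<otimes>\<^bsub>G\<^esub> inv\<^bsub>G\<^esub> x \<in> U"
        using F(3) that(2) x by blast
      ultimately show "\<phi> (x \<otimes>\<^bsub>G\<^esub> g \<otimes>\<^bsub>G\<^esub> inv\<^bsub>G\<^esub> x) x0 = x0"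
        using \<U>(3) by blast
    qed
    then show ?thesis using F(1,2) by blast
  qed
  then obtain F where F: "countable F" "\<forall>V \<in> F. openin T V \<and> \<one>\<^bsub>G\<^esub> \<in> V"
    "\<forall>g \<in> carrier G. (\<forall>V \<in> F. g \<in> V) \<longrightarrow> g = \<one>\<^bsub>G\<^esub>"
    by blast
  have "topspace T \<inter> \<Inter>F = {\<one>\<^bsub>G\<^esub>}"
    using F(2,3) carrier by auto
  then show ?thesis
    unfolding countable_pseudocharacter_at_def using F(1,2) by (intro exI[of _ F]) simp
qed

theorem corollary4p11:
  fixes G :: "('a, 'm) monoid_scheme" and T :: "'a topology" and X :: "'b topology"
  assumes "tychonoff_space X"
    and "countable_character X"
    and "topological_group G T"
    and "tychonoff_space T"
    and "omega_balanced G T"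
    and "\<not> countable_pseudocharacter T"
  shows "\<not> (\<exists>\<phi>. continuous_action G T X \<phi> \<and> effective_action G (topspace X) \<phi> \<and>
                 is_transitive_action G (topspace X) \<phi>)"
proof
  assume "\<exists>\<phi>. continuous_action G T X \<phi> \<and> effective_action G (topspace X) \<phi> \<and>
                 is_transitive_action G (topspace X) \<phi>"
  then obtain \<phi> where act: "continuous_action G T X \<phi>" "effective_action G (topspace X) \<phi>"
    "is_transitive_action G (topspace X) \<phi>" by blast
  have "t1_space X" using assms(1) unfolding tychonoff_space_def by simp
  moreover have "first_countable X" using assms(2) unfolding countable_character_def .
  ultimately have "countable_pseudocharacter_at T \<one>\<^bsub>G\<^esub>"
    using countable_pseudocharacter_at_one_if_effective_transitive_action[OF assms(3,5) act]
    by blast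
  then show False
    using topological_group_countable_pseudocharacter[OF assms(3)] assms(6) by blast
qed

end
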